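(* Let $p$ be an odd prime and let $\alpha\ge 1$, $\beta\ge 2$ be integers. Then the dihedral group $D_{2p^{\alpha}}\cong ZM(p^{\alpha},2,p^{\alpha}-1)$ of order $2p^\alpha$ and the dicyclic group $Dic_{4p^{\beta}}\cong ZM(p^{\beta},4,p^{\beta}-1)$ of order $4p^\beta$ are not $\psi$-divisible.
   Context: For a finite group $G$, $\psi(G)=\sum_{x\in G} o(x)$ denotes the sum of the orders of all elements of $G$. A finite group $G$ is called $\psi$-divisible if $\psi(H)$ divides $\psi(G)$ for every subgroup $H$ of $G$. For positive integers $m,n,r$ with $\gcd(m,n)=\gcd(m,r-1)=1$ and $r^n\equiv 1\pmod m$, $ZM(m,n,r)=\langle a,b \mid a^m=b^n=1,\ b^{-1}ab=a^r\rangle$. *)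

theory Defs
  imports "HOL-Algebra.Multiplicative_Group" "HOL-Computational_Algebra.Primes"
begin

definition psi :: "('a, 'b) monoid_scheme \<Rightarrow> nat" where
  "psi G = (\<Sum>x\<in>carrier G. group.ord G x)"

definition psi_divisible :: "('a, 'b) monoid_scheme \<Rightarrow> bool" where
  "psi_divisible G \<longleftrightarrow>
     (\<forall>H. subgroup H G \<longrightarrow> psi (G\<lparr>carrier := H\<rparr>) dvd psi G)"

text \<open>The metacyclic group ZM(m,n,r) = <a,b | a^m = b^n = 1, b^-1 a b = a^r>,
  realised concretely on normal forms b^j a^i (0 \<le> j < n, 0 \<le> i < m),
  encoded as the pair (j, i).  Since b^-l a^i b^l = a^(i r^l), we have
  (b^j a^i)(b^l a^k) = b^(j+l) a^(i r^l + k).\<close>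
definition ZM :: "nat \<Rightarrow> nat \<Rightarrow> nat \<Rightarrow> (nat \<times> nat) monoid" where
  "ZM m n r = \<lparr> carrier = {0..<n} \<times> {0..<m},
               monoid.mult = (\<lambda>(j, i) (l, k). ((j + l) mod n, (i * r ^ l + k) mod m)),
               monoid.one = (0, 0) \<rparr>"

end

theory Submission
  imports Defs "HOL-Number_Theory.Cong"
begin

(* In G = ZM(p^e, n, p^e - 1) the powers of a form a cyclic subgroup C of order p^e. All orders
   of elements of C are powers of p, and only 1 has order 1, so psi(C) is odd and congruent to 1
   modulo p; since also psi(C) \<ge> p^e > 1, psi(C) divides no number 2^k p^e.
   For n = 2 every b a^i is an involution, so psi(G) = psi(C) + 2 p^e.  For n = 4 every b^j a^i
   with j odd has order 4, and b^2 a^i is the product of the central involution b^2 with a^i, of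
   order 2 o(a^i); so psi(G) = 3 psi(C) + 8 p^e.  In both cases psi(C) does not divide psi(G). *)

lemma ord_subgroup:
  assumes "group G" and "subgroup H G" and "x \<in> H"
  shows "group.ord (G\<lparr>carrier := H\<rparr>) x = group.ord G x"
proof -
  have H_group: "group (G\<lparr>carrier := H\<rparr>)"
    using subgroup.subgroup_is_group[OF assms(2,1)] .
  have x: "x \<in> carrier G"
    using subgroup.subset[OF assms(2)] assms(3) by blast
  show ?thesis
    unfolding group.ord_unique[OF H_group, of x, simplified, OF assms(3)]
    using group.pow_eq_id[OF assms(1) x]
      monoid.nat_pow_consistent[OF group.is_monoid[OF assms(1)], of x _ H]
    by simp
qed

lemma psi_subgroup:
  assumes "group G" and "subgroup H G"
  shows "psi (G\<lparr>carrier := H\<rparr>) = (\<Sum>x\<in>H. group.ord G x)"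
  unfolding psi_def using ord_subgroup[OF assms] by simp

lemma (in group) ord_eq_prime_power:
  assumes "prime p" and x: "x \<in> carrier G"
    and "x [^] (p ^ Suc k) = \<one>" and "x [^] (p ^ k) \<noteq> \<one>"
  shows "ord x = p ^ Suc k"
proof -
  obtain j where j: "j \<le> Suc k" "ord x = p ^ j"
    using assms(3) pow_eq_id[OF x] divides_primepow_nat[OF assms(1)] by blast
  have "\<not> ord x dvd p ^ k"
    using assms(4) pow_eq_id[OF x] by blast
  then have "j = Suc k"
    using j by (metis le_SucE le_imp_power_dvd)
  then show ?thesis
    using j by simp
qed

lemma (in group) order_le_psi:
  assumes "finite (carrier G)"
  shows "order G \<le> psi G"
proof -
  have "order G = (\<Sum>x\<in>carrier G. 1)"
    by (simp add: order_def)
  also have "\<dots> \<le> psi G"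
    unfolding psi_def by (rule sum_mono) (use ord_ge_1 assms in auto)
  finally show ?thesis .
qed

lemma (in group) odd_psi_of_odd_order:
  assumes "odd (order G)"
  shows "odd (psi G)"
proof -
  have fin: "finite (carrier G)"
    using assms order_gt_0_iff_finite by fastforce
  have "odd (ord x)" if "x \<in> carrier G" for x
    using assms ord_dvd_group_order[OF that] dvd_trans by blast
  then have "{x \<in> carrier G. odd (ord x)} = carrier G"
    by blast
  then show ?thesis
    unfolding psi_def using even_sum_iff[OF fin, of "ord"] assms by (simp add: order_def)
qed

lemma (in group) psi_mod_prime_of_prime_power_order:
  assumes p: "prime p" and order: "order G = p ^ e"
  shows "psi G mod p = 1"
proof -
  have fin: "finite (carrier G)"
    using order p order_gt_0_iff_finite by (metis prime_gt_0_nat zero_less_power)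
  have "p dvd ord x" if x: "x \<in> carrier G - {\<one>}" for x
  proof -
    obtain k where "ord x = p ^ k"
      using ord_dvd_group_order[of x] x order divides_primepow_nat[OF p] by auto
    moreover have "ord x \<noteq> 1"
      using x ord_eq_1 by blast
    ultimately show ?thesis
      by (cases k) auto
  qed
  then have "p dvd (\<Sum>x\<in>carrier G - {\<one>}. ord x)"
    by (rule dvd_sum)
  moreover have "psi G = 1 + (\<Sum>x\<in>carrier G - {\<one>}. ord x)"
    unfolding psi_def using sum.remove[OF fin one_closed, of ord] by simp
  ultimately show ?thesis
    using prime_gt_1_nat[OF p] by (metis add.right_neutral dvd_eq_mod_eq_0 mod_add_right_eq mod_less)
qed

lemma (in group) psi_not_dvd_two_power_mult_order:
  assumes p: "prime p" "odd p" and order: "order G = p ^ e" and "e \<ge> 1"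
  shows "\<not> psi G dvd 2 ^ a * order G"
proof
  assume dvd: "psi G dvd 2 ^ a * order G"
  have "\<not> p dvd psi G"
    using psi_mod_prime_of_prime_power_order[OF p(1) order] by (simp add: dvd_eq_mod_eq_0)
  then have "coprime (psi G) p"
    using prime_imp_coprime[OF p(1)] coprime_commute by blast
  moreover have "coprime (psi G) 2"
    using odd_psi_of_odd_order p(2) order by simp
  ultimately have "coprime (psi G) (2 ^ a * order G)"
    unfolding order by (simp add: coprime_power_right_iff)
  then have "psi G = 1"
    using dvd coprime_common_divisor[of "psi G" "2 ^ a * order G" "psi G"] by simp
  moreover have "order G \<le> psi G"
    using order_le_psi order p(1) order_gt_0_iff_finite by (simp add: prime_gt_0_nat)
  moreover have "p ^ 1 \<le> p ^ e"
    using \<open>e \<ge> 1\<close> prime_gt_0_nat[OF p(1)] by (intro power_increasing) auto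
  ultimately show False
    using prime_gt_1_nat[OF p(1)] order by simp
qed

lemma cong_power_mod_exponent:
  fixes r m n :: nat
  assumes "[r ^ n = 1] (mod m)"
  shows "[r ^ (x mod n) = r ^ x] (mod m)"
proof -
  have "r ^ x = r ^ (n * (x div n) + x mod n)"
    by simp
  also have "\<dots> = (r ^ n) ^ (x div n) * r ^ (x mod n)"
    by (simp only: power_add power_mult)
  also have "[\<dots> = 1 ^ (x div n) * r ^ (x mod n)] (mod m)"
    by (intro cong_mult cong_pow assms cong_refl)
  finally show ?thesis
    by (simp add: cong_sym)
qed

lemma cong_minus_one_square:
  fixes m :: nat
  assumes "m > 0"
  shows "[(m - 1) ^ 2 = 1] (mod m)"
proof -
  have "[int m - 1 = - 1] (mod int m)"
    by (simp add: cong_iff_dvd_diff)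
  then have "[(int m - 1) ^ 2 = (- 1) ^ 2] (mod int m)"
    by (rule cong_pow)
  then show ?thesis
    using assms by (simp flip: cong_int_iff)
qed

lemma cong_minus_one_power_even:
  fixes m :: nat
  assumes "m > 0" and "even l"
  shows "[(m - 1) ^ l = 1] (mod m)"
  using cong_power_mod_exponent[OF cong_minus_one_square[OF assms(1)], of l] assms(2)
  by (simp add: cong_sym_eq)

lemma cong_minus_one_power_odd:
  fixes m :: nat
  assumes "m > 0" and "odd l"
  shows "[(m - 1) ^ l = m - 1] (mod m)"
  using cong_power_mod_exponent[OF cong_minus_one_square[OF assms(1)], of l] assms(2)
  by (simp add: cong_sym_eq odd_iff_mod_2_eq_one)

lemma mod_mult_add_left_eq: "(a mod m * b + c) mod m = (a * b + c) mod (m :: nat)"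
  by (metis mod_add_left_eq mod_mult_left_eq)

lemma ZM_carrier: "carrier (ZM m n r) = {..<n} \<times> {..<m}"
  by (simp add: ZM_def atLeast0LessThan)

lemma ZM_mult: "(j, i) \<otimes>\<^bsub>ZM m n r\<^esub> (l, k) = ((j + l) mod n, (i * r ^ l + k) mod m)"
  by (simp add: ZM_def)

lemma ZM_one [simp]: "\<one>\<^bsub>ZM m n r\<^esub> = (0, 0)"
  by (simp add: ZM_def)

lemma group_ZM:
  fixes m n r :: nat
  assumes "m > 0" and "n > 0" and r: "[r ^ n = 1] (mod m)"
  shows "group (ZM m n r)"
proof (rule groupI)
  let ?G = "ZM m n r"
  show "x \<otimes>\<^bsub>?G\<^esub> y \<in> carrier ?G" if "x \<in> carrier ?G" "y \<in> carrier ?G" for x y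
    using that assms by (auto simp: ZM_carrier ZM_mult)
  show "\<one>\<^bsub>?G\<^esub> \<in> carrier ?G"
    using assms by (simp add: ZM_carrier)
  show "\<one>\<^bsub>?G\<^esub> \<otimes>\<^bsub>?G\<^esub> x = x" if "x \<in> carrier ?G" for x
    using that by (auto simp: ZM_carrier ZM_mult)
  show "(x \<otimes>\<^bsub>?G\<^esub> y) \<otimes>\<^bsub>?G\<^esub> z = x \<otimes>\<^bsub>?G\<^esub> (y \<otimes>\<^bsub>?G\<^esub> z)" for x y z
  proof -
    obtain j i l k s t where xyz: "x = (j, i)" "y = (l, k)" "z = (s, t)"
      by (metis prod.exhaust)
    have "[(i * r ^ l + k) mod m * r ^ s + t = (i * r ^ l + k) * r ^ s + t] (mod m)"
      by (intro cong_add cong_mult cong_refl) (simp add: cong_def)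
    also have "(i * r ^ l + k) * r ^ s + t = i * r ^ (l + s) + (k * r ^ s + t)"
      by (simp add: power_add algebra_simps)
    also have "[\<dots> = i * r ^ ((l + s) mod n) + (k * r ^ s + t) mod m] (mod m)"
      by (intro cong_add cong_mult cong_refl cong_sym[OF cong_power_mod_exponent[OF r]])
        (simp add: cong_def)
    finally have "[(i * r ^ l + k) mod m * r ^ s + t
                  = i * r ^ ((l + s) mod n) + (k * r ^ s + t) mod m] (mod m)" .
    then show ?thesis
      unfolding xyz by (simp add: ZM_mult cong_def mod_simps add.assoc)
  qed
  show "\<exists>y\<in>carrier ?G. y \<otimes>\<^bsub>?G\<^esub> x = \<one>\<^bsub>?G\<^esub>" if x_carrier: "x \<in> carrier ?G" for x
  proof -
    obtain j i where x: "x = (j, i)" "j < n" "i < m"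
      using x_carrier by (cases x) (auto simp: ZM_carrier)
    (* the inverse of (j, i) is (-j, -i r^(n-j)), computed mod (n, m) *)
    have "r ^ (n - j) * r ^ j = r ^ n"
      using x(2) by (simp flip: power_add)
    then have "[(m - 1) * i * r ^ (n - j) * r ^ j + i = (m - 1) * i * 1 + i] (mod m)"
      by (simp only: mult.assoc) (intro cong_add cong_mult cong_refl r)
    also have "(m - 1) * i * 1 + i = m * i"
      using assms(1) by (simp add: algebra_simps)
    finally have "((m - 1) * i * r ^ (n - j) mod m * r ^ j + i) mod m = 0"
      by (simp add: cong_def mod_mult_add_left_eq)
    moreover have "((n - j) mod n + j) mod n = 0"
      using x(2) by (simp add: mod_simps)
    ultimately show ?thesis
      using assms x by (intro bexI[of _ "((n - j) mod n, (m - 1) * i * r ^ (n - j) mod m)"])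
        (auto simp: ZM_carrier ZM_mult)
  qed
qed

lemma group_ZM_minus_one:
  assumes "m > 0" and "even n" and "n > 0"
  shows "group (ZM m n (m - 1))"
  using assms by (intro group_ZM cong_minus_one_power_even)

lemma ZM_minus_one_pow_even:
  assumes "m > 0" and "even j"
  shows "(j, i) [^]\<^bsub>ZM m n (m - 1)\<^esub> (k :: nat) = ((j * k) mod n, (i * k) mod m)"
proof (induction k)
  case 0
  then show ?case by simp
next
  case (Suc k)
  have "[(i * k) mod m * (m - 1) ^ j + i = i * k * 1 + i] (mod m)"
    using assms by (intro cong_add cong_mult cong_refl cong_minus_one_power_even) (simp_all add: cong_def)
  then show ?case
    using Suc by (simp add: ZM_mult cong_def mod_simps algebra_simps)
qed

lemma ZM_minus_one_square_odd:
  assumes "m > 0" and "odd j"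
  shows "(j, i) \<otimes>\<^bsub>ZM m n (m - 1)\<^esub> (j, i) = ((j + j) mod n, 0)"
proof -
  have "[i * (m - 1) ^ j + i = i * (m - 1) + i] (mod m)"
    using assms by (intro cong_add cong_mult cong_refl cong_minus_one_power_odd)
  moreover have "i * (m - 1) + i = i * m"
    using assms(1) by (simp add: algebra_simps)
  ultimately show ?thesis
    by (simp add: ZM_mult cong_def)
qed

definition ZM_powers_a :: "nat \<Rightarrow> (nat \<times> nat) set" where
  "ZM_powers_a m = {0} \<times> {..<m}"

lemma subgroup_ZM_powers_a:
  assumes "group (ZM m n r)" and "m > 0" and "n > 0"
  shows "subgroup (ZM_powers_a m) (ZM m n r)"
proof (rule group.subgroupI[OF assms(1)])
  let ?G = "ZM m n r"
  show "ZM_powers_a m \<subseteq> carrier ?G" and "ZM_powers_a m \<noteq> {}"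
    using assms by (auto simp: ZM_powers_a_def ZM_carrier)
  show "x \<otimes>\<^bsub>?G\<^esub> y \<in> ZM_powers_a m" if "x \<in> ZM_powers_a m" "y \<in> ZM_powers_a m" for x y
    using that assms by (auto simp: ZM_powers_a_def ZM_mult)
  show "inv\<^bsub>?G\<^esub> x \<in> ZM_powers_a m" if x: "x \<in> ZM_powers_a m" for x
  proof -
    obtain i where i: "x = (0, i)" "i < m"
      using x by (auto simp: ZM_powers_a_def)
    have "inv\<^bsub>?G\<^esub> x = (0, (m - i) mod m)"
      using assms i by (intro group.inv_equality) (auto simp: ZM_carrier ZM_mult mod_simps)
    then show ?thesis
      using assms by (simp add: ZM_powers_a_def)
  qed
qed

lemma order_ZM_powers_a: "order (ZM m n r\<lparr>carrier := ZM_powers_a m\<rparr>) = m"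
  by (simp add: order_def ZM_powers_a_def card_cartesian_product)

lemma psi_ZM: "psi (ZM m n r) = (\<Sum>j<n. \<Sum>i<m. group.ord (ZM m n r) (j, i))"
  by (simp add: psi_def ZM_carrier sum.cartesian_product)

lemma psi_ZM_powers_a:
  assumes "group (ZM m n r)" and "m > 0" and "n > 0"
  shows "psi (ZM m n r\<lparr>carrier := ZM_powers_a m\<rparr>) = (\<Sum>i<m. group.ord (ZM m n r) (0, i))"
proof -
  have "ZM_powers_a m = Pair 0 ` {..<m}"
    by (auto simp: ZM_powers_a_def)
  then show ?thesis
    using psi_subgroup[OF assms(1) subgroup_ZM_powers_a[OF assms]]
    by (simp add: sum.reindex inj_on_def)
qed

lemma ord_ZM_dihedral_reflection:
  assumes "m > 0" and "i < m"
  shows "group.ord (ZM m 2 (m - 1)) (1, i) = 2"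
proof -
  let ?G = "ZM m 2 (m - 1)"
  interpret group ?G
    using assms(1) by (intro group_ZM_minus_one) auto
  have x: "(1, i) \<in> carrier ?G"
    using assms by (simp add: ZM_carrier)
  have "(1, i) [^]\<^bsub>?G\<^esub> (2 :: nat) = (1, i) \<otimes>\<^bsub>?G\<^esub> (1, i)"
    using assms by (simp add: numeral_2_eq_2 ZM_mult)
  also have "\<dots> = \<one>\<^bsub>?G\<^esub>"
    using ZM_minus_one_square_odd[OF assms(1)] by simp
  finally show ?thesis
    using ord_eq_prime_power[of 2 "(1, i)" 0] x assms(2) by (simp add: ZM_mult)
qed

lemma ord_ZM_dicyclic_odd:
  assumes "m > 0" and "odd j" and "j < 4" and "i < m"
  shows "group.ord (ZM m 4 (m - 1)) (j, i) = 4"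
proof -
  let ?G = "ZM m 4 (m - 1)"
  interpret group ?G
    using assms(1) by (intro group_ZM_minus_one) auto
  have x: "(j, i) \<in> carrier ?G"
    using assms by (simp add: ZM_carrier)
  have "(j, i) [^]\<^bsub>?G\<^esub> (2 :: nat) = (j, i) \<otimes>\<^bsub>?G\<^esub> (j, i)"
    using assms by (simp add: numeral_2_eq_2 ZM_mult)
  also have "\<dots> = (2, 0)"
    using ZM_minus_one_square_odd[OF assms(1,2)] assms(2,3) by simp presburger
  finally have square: "(j, i) [^]\<^bsub>?G\<^esub> (2 :: nat) = (2, 0)" .
  have "(j, i) [^]\<^bsub>?G\<^esub> (2 * 2 :: nat) = (2, 0) [^]\<^bsub>?G\<^esub> (2 :: nat)"
    using x square by (simp only: nat_pow_pow[symmetric])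
  also have "\<dots> = \<one>\<^bsub>?G\<^esub>"
    using ZM_minus_one_pow_even[OF assms(1), of 2 4 0 2] by simp
  finally show ?thesis
    using ord_eq_prime_power[of 2 "(j, i)" 1] x square by simp
qed

lemma ord_ZM_dicyclic_central:
  assumes "odd m" and "i < m"
  shows "group.ord (ZM m 4 (m - 1)) (2, i) = 2 * group.ord (ZM m 4 (m - 1)) (0, i)"
proof -
  let ?G = "ZM m 4 (m - 1)"
  have m: "m > 0"
    using assms(1) by (simp add: odd_pos)
  interpret group ?G
    using m by (intro group_ZM_minus_one) auto
  let ?o = "ord (0, i)"
  have a: "(0, i) \<in> carrier ?G" and x: "(2, i) \<in> carrier ?G"
    using assms by (simp_all add: ZM_carrier)
  have "(0, i) [^]\<^bsub>?G\<^esub> m = \<one>\<^bsub>?G\<^esub>"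
    using ZM_minus_one_pow_even[OF m, of 0 4 i m] by simp
  then have "odd ?o"
    using pow_eq_id[OF a] assms(1) dvd_trans by blast
  then have coprime: "coprime 2 ?o"
    by simp
  have "(2, i) [^]\<^bsub>?G\<^esub> d = \<one>\<^bsub>?G\<^esub> \<longleftrightarrow> 2 * ?o dvd d" for d :: nat
  proof -
    have "(2 * d) mod 4 = 0 \<longleftrightarrow> 2 dvd d"
      by presburger
    then have "(2, i) [^]\<^bsub>?G\<^esub> d = \<one>\<^bsub>?G\<^esub> \<longleftrightarrow> 2 dvd d \<and> (0, i) [^]\<^bsub>?G\<^esub> d = \<one>\<^bsub>?G\<^esub>"
      using ZM_minus_one_pow_even[OF m, of 2 4 i d] ZM_minus_one_pow_even[OF m, of 0 4 i d]
      by simp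
    also have "\<dots> \<longleftrightarrow> 2 dvd d \<and> ?o dvd d"
      using pow_eq_id[OF a] by simp
    also have "\<dots> \<longleftrightarrow> 2 * ?o dvd d"
      using coprime by (auto intro: divides_mult dvd_mult_left)
    finally show ?thesis .
  qed
  then show ?thesis
    using ord_unique[OF x] by blast
qed

lemma psi_ZM_dihedral:
  assumes "m > 0"
  shows "psi (ZM m 2 (m - 1)) = psi (ZM m 2 (m - 1)\<lparr>carrier := ZM_powers_a m\<rparr>) + 2 * m"
proof -
  let ?G = "ZM m 2 (m - 1)"
  have "psi (?G\<lparr>carrier := ZM_powers_a m\<rparr>) = (\<Sum>i<m. group.ord ?G (0, i))"
    using assms by (intro psi_ZM_powers_a group_ZM_minus_one) auto
  moreover have "(\<Sum>i<m. group.ord ?G (1, i)) = 2 * m"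
    using ord_ZM_dihedral_reflection[OF assms] by simp
  ultimately show ?thesis
    by (simp add: psi_ZM numeral_2_eq_2)
qed

lemma psi_ZM_dicyclic:
  assumes "odd m"
  shows "psi (ZM m 4 (m - 1)) = 3 * psi (ZM m 4 (m - 1)\<lparr>carrier := ZM_powers_a m\<rparr>) + 8 * m"
proof -
  let ?G = "ZM m 4 (m - 1)"
  have m: "m > 0"
    using assms by (simp add: odd_pos)
  have "psi (?G\<lparr>carrier := ZM_powers_a m\<rparr>) = (\<Sum>i<m. group.ord ?G (0, i))"
    using m by (intro psi_ZM_powers_a group_ZM_minus_one) auto
  moreover have "(\<Sum>i<m. group.ord ?G (j, i)) = 4 * m" if "j \<in> {1, 3}" for j
  proof -
    have "(\<Sum>i<m. group.ord ?G (j, i)) = (\<Sum>i<m. 4)"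
      using ord_ZM_dicyclic_odd[OF m, of j] that by (intro sum.cong) auto
    then show ?thesis
      by simp
  qed
  moreover have "(\<Sum>i<m. group.ord ?G (2, i)) = 2 * (\<Sum>i<m. group.ord ?G (0, i))"
    using ord_ZM_dicyclic_central[OF assms] by (simp add: sum_distrib_left)
  moreover have "{..<4 :: nat} = {0, 1, 2, 3}"
    by auto
  ultimately show ?thesis
    by (simp add: psi_ZM)
qed

lemma not_psi_divisible_of_subgroup:
  assumes "subgroup H G"
    and "psi G = c * psi (G\<lparr>carrier := H\<rparr>) + x" and "\<not> psi (G\<lparr>carrier := H\<rparr>) dvd x"
  shows "\<not> psi_divisible G"
  using assms unfolding psi_divisible_def by (metis dvd_add_right_iff dvd_triv_right)

lemma not_psi_divisible_ZM_minus_one: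
  assumes p: "prime p" "odd p" and "e \<ge> 1" and n: "even n" "n > 0"
    and psi: "psi (ZM (p ^ e) n (p ^ e - 1))
      = c * psi (ZM (p ^ e) n (p ^ e - 1)\<lparr>carrier := ZM_powers_a (p ^ e)\<rparr>) + 2 ^ a * p ^ e"
  shows "\<not> psi_divisible (ZM (p ^ e) n (p ^ e - 1))"
proof -
  let ?G = "ZM (p ^ e) n (p ^ e - 1)"
  have pe: "p ^ e > 0"
    using p(1) by (simp add: prime_gt_0_nat)
  have G: "group ?G"
    using group_ZM_minus_one[OF pe n] .
  have H: "subgroup (ZM_powers_a (p ^ e)) ?G"
    using subgroup_ZM_powers_a[OF G pe n(2)] .
  have "\<not> psi (?G\<lparr>carrier := ZM_powers_a (p ^ e)\<rparr>) dvd 2 ^ a * p ^ e"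
    using group.psi_not_dvd_two_power_mult_order[OF subgroup.subgroup_is_group[OF H G] p]
      order_ZM_powers_a \<open>e \<ge> 1\<close> by metis
  then show ?thesis
    using not_psi_divisible_of_subgroup[OF H psi] by blast
qed

theorem corollary2p5:
  fixes p \<alpha> \<beta> :: nat
  assumes "prime p" and "odd p" and "\<alpha> \<ge> 1" and "\<beta> \<ge> 2"
  shows "\<not> psi_divisible (ZM (p ^ \<alpha>) 2 (p ^ \<alpha> - 1))
         \<and> \<not> psi_divisible (ZM (p ^ \<beta>) 4 (p ^ \<beta> - 1))"
proof
  show "\<not> psi_divisible (ZM (p ^ \<alpha>) 2 (p ^ \<alpha> - 1))"
    using assms psi_ZM_dihedral[of "p ^ \<alpha>"]
    by (intro not_psi_divisible_ZM_minus_one[where c = 1 and a = 1]) (simp_all add: prime_gt_0_nat)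
  show "\<not> psi_divisible (ZM (p ^ \<beta>) 4 (p ^ \<beta> - 1))"
    using assms psi_ZM_dicyclic[of "p ^ \<beta>"]
    by (intro not_psi_divisible_ZM_minus_one[where c = 3 and a = 3]) simp_all
qed

end
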